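(* Let $r \ge 1$ and let $E, B \subseteq \mathbb{R}^r$ be axis-aligned bounding boxes. Then the function $g : \mathbb{R}^r \to \mathbb{R}$ defined by $g(p) = \mathrm{MaxDist}(p, E)^2 - \mathrm{MinDist}(p, B)^2$ is convex.
   Context: An axis-aligned bounding box (AABB) in $\mathbb{R}^r$ is a set $M = \prod_{d=1}^r [\check{M}_d, \hat{M}_d]$ with real numbers $\check{M}_d \le \hat{M}_d$ for each $d$. $\mathrm{dist}$ is the Euclidean distance on $\mathbb{R}^r$. For a point $p$ and an AABB $M$, $\mathrm{MaxDist}(p, M) = \max_{q \in M} \mathrm{dist}(p, q)$ and $\mathrm{MinDist}(p, M) = \min_{q \in M} \mathrm{dist}(p, q)$. *)

theory Defs
  imports "HOL-Analysis.Analysis"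
begin

text \<open>Points of R^r are vectors of type real^'r (r = CARD('r) >= 1).
  An axis-aligned bounding box is a product of nonempty closed intervals.\<close>

definition is_aabb :: "(real ^ 'r) set \<Rightarrow> bool" where
  "is_aabb M \<longleftrightarrow> (\<exists>lo hi :: real ^ 'r. (\<forall>d. lo $ d \<le> hi $ d) \<and>
      M = {x. \<forall>d. lo $ d \<le> x $ d \<and> x $ d \<le> hi $ d})"

definition MaxDist :: "real ^ 'r \<Rightarrow> (real ^ 'r) set \<Rightarrow> real" where
  "MaxDist p M = (SUP q\<in>M. dist p q)"

definition MinDist :: "real ^ 'r \<Rightarrow> (real ^ 'r) set \<Rightarrow> real" where
  "MinDist p M = (INF q\<in>M. dist p q)"

end

theory Submission
  imports Defs
begin

text \<open>For fixed \<open>q\<close> and \<open>b\<close> the difference \<open>dist p q\<^sup>2 - dist p b\<^sup>2\<close> is affine in \<open>p\<close>,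
  because the quadratic terms cancel. Choosing \<open>q \<in> E\<close> farthest from and \<open>b \<in> B\<close> nearest
  to a given point \<open>z\<close> gives such an affine function that lies below
  \<open>g p = MaxDist p E\<^sup>2 - MinDist p B\<^sup>2\<close> everywhere and touches it at \<open>z\<close>. A function
  with a convex minorant touching it at every point is convex.\<close>

lemma convex_on_if_touching_convex_minorants:
  fixes g :: "'a::real_vector \<Rightarrow> real"
  assumes "convex S"
    and touch: "\<And>z. z \<in> S \<Longrightarrow> \<exists>h. convex_on S h \<and> (\<forall>p\<in>S. h p \<le> g p) \<and> h z = g z"
  shows "convex_on S g"
proof (rule convex_onI[OF _ \<open>convex S\<close>])
  fix t :: real and x y :: 'a
  assume t: "0 < t" "t < 1" and xy: "x \<in> S" "y \<in> S"
  define z where "z = (1 - t) *\<^sub>R x + t *\<^sub>R y"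
  have "z \<in> S" using \<open>convex S\<close> t xy unfolding z_def by (simp add: convex_alt)
  then obtain h where h: "convex_on S h" "\<forall>p\<in>S. h p \<le> g p" "h z = g z"
    using touch by blast
  have "g z = h z" using h(3) ..
  also have "\<dots> \<le> (1 - t) * h x + t * h y"
    using convex_onD[OF h(1)] t xy unfolding z_def by simp
  also have "\<dots> \<le> (1 - t) * g x + t * g y"
    using h(2) t xy by (intro add_mono mult_left_mono) auto
  finally show "g ((1 - t) *\<^sub>R x + t *\<^sub>R y) \<le> (1 - t) * g x + t * g y"
    unfolding z_def .
qed

lemma power2_dist_diff_eq:
  fixes p a b :: "'a::real_inner"
  shows "(dist p a)\<^sup>2 - (dist p b)\<^sup>2 = 2 * (p \<bullet> (b - a)) + (norm a)\<^sup>2 - (norm b)\<^sup>2"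
  unfolding dist_norm power2_norm_eq_inner
  by (simp add: inner_diff_left inner_diff_right inner_commute)

lemma convex_on_power2_dist_diff:
  fixes a b :: "'a::real_inner"
  shows "convex_on UNIV (\<lambda>p. (dist p a)\<^sup>2 - (dist p b)\<^sup>2)"
proof (rule convex_onI)
  fix t :: real and x y :: 'a
  show "(dist ((1 - t) *\<^sub>R x + t *\<^sub>R y) a)\<^sup>2 - (dist ((1 - t) *\<^sub>R x + t *\<^sub>R y) b)\<^sup>2
      \<le> (1 - t) * ((dist x a)\<^sup>2 - (dist x b)\<^sup>2) + t * ((dist y a)\<^sup>2 - (dist y b)\<^sup>2)"
    unfolding power2_dist_diff_eq by (simp add: inner_add_left algebra_simps)
qed simp

lemma dist_le_MaxDist:
  assumes "bounded E" "q \<in> E"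
  shows "dist p q \<le> MaxDist p E"
proof -
  have "bdd_above (dist p ` E)"
    using \<open>bounded E\<close> by (meson bdd_above.I2 bounded_any_center)
  then show ?thesis unfolding MaxDist_def using assms(2) by (rule cSUP_upper2) simp
qed

lemma MaxDist_attained:
  assumes "compact E" "E \<noteq> {}"
  obtains q where "q \<in> E" "MaxDist p E = dist p q"
proof -
  obtain q where q: "q \<in> E" "\<forall>y\<in>E. dist p y \<le> dist p q"
    using continuous_attains_sup[OF assms continuous_on_dist[OF continuous_on_const continuous_on_id]]
    by blast
  have "MaxDist p E = dist p q"
    unfolding MaxDist_def by (rule cSup_eq_maximum) (use q in auto)
  with q(1) show ?thesis by (rule that)
qed

lemma MinDist_eq_infdist: "B \<noteq> {} \<Longrightarrow> MinDist p B = infdist p B"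
  by (simp add: MinDist_def infdist_def)

lemma power2_MinDist_le:
  assumes "b \<in> B"
  shows "(MinDist p B)\<^sup>2 \<le> (dist p b)\<^sup>2"
proof -
  have "MinDist p B = infdist p B" using assms MinDist_eq_infdist by blast
  then show ?thesis using infdist_le[OF assms, of p] infdist_nonneg[of p B] by (simp add: power_mono)
qed

lemma MinDist_attained:
  assumes "closed B" "B \<noteq> {}"
  obtains b where "b \<in> B" "MinDist p B = dist p b"
  using infdist_attains_inf[OF assms, of p] MinDist_eq_infdist[OF assms(2)] by metis

lemma convex_on_power2_MaxDist_diff_power2_MinDist:
  fixes E B :: "(real ^ 'r) set"
  assumes "compact E" "E \<noteq> {}" "closed B" "B \<noteq> {}"
  shows "convex_on UNIV (\<lambda>p. (MaxDist p E)\<^sup>2 - (MinDist p B)\<^sup>2)"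
proof (rule convex_on_if_touching_convex_minorants)
  fix z :: "real ^ 'r"
  obtain q where q: "q \<in> E" "MaxDist z E = dist z q" using MaxDist_attained assms(1,2) .
  obtain b where b: "b \<in> B" "MinDist z B = dist z b" using MinDist_attained assms(3,4) .
  have "(dist p q)\<^sup>2 \<le> (MaxDist p E)\<^sup>2" for p
    using dist_le_MaxDist[OF compact_imp_bounded[OF assms(1)] q(1)] by (simp add: power_mono)
  then have "(dist p q)\<^sup>2 - (dist p b)\<^sup>2 \<le> (MaxDist p E)\<^sup>2 - (MinDist p B)\<^sup>2" for p
    using power2_MinDist_le[OF b(1)] by (rule diff_mono)
  with q b show "\<exists>h. convex_on UNIV h \<and> (\<forall>p\<in>UNIV. h p \<le> (MaxDist p E)\<^sup>2 - (MinDist p B)\<^sup>2)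
      \<and> h z = (MaxDist z E)\<^sup>2 - (MinDist z B)\<^sup>2"
    by (intro exI[of _ "\<lambda>p. (dist p q)\<^sup>2 - (dist p b)\<^sup>2"]) (simp add: convex_on_power2_dist_diff)
qed simp

lemma aabb_eq_cbox:
  assumes "is_aabb M"
  obtains lo hi :: "real ^ 'r" where "\<forall>d. lo $ d \<le> hi $ d" "M = cbox lo hi"
  using assms unfolding is_aabb_def interval_cart(2) by blast

lemma compact_aabb: "is_aabb M \<Longrightarrow> compact M"
  by (metis aabb_eq_cbox compact_cbox)

lemma aabb_nonempty: "is_aabb M \<Longrightarrow> M \<noteq> {}"
  by (metis aabb_eq_cbox interval_ne_empty_cart(1))

theorem lemma4p4:
  fixes E B :: "(real ^ 'r) set"
  assumes "is_aabb E" and "is_aabb B"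
  shows "convex_on UNIV (\<lambda>p. (MaxDist p E)\<^sup>2 - (MinDist p B)\<^sup>2)"
  using assms by (intro convex_on_power2_MaxDist_diff_power2_MinDist
      compact_aabb aabb_nonempty compact_imp_closed)

end
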